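(* Assume $W_c$ satisfies Assumption 1, let $r>0$, and suppose $rH^{W_s}(M)+H^{W_c}(X|Z)<R$. Then \[ \liminf_{n\to\infty}-\frac1n\log P_j(\lfloor rn\rfloor,n)\ge\sup_{s\in(0,1)}\big[sR-U[W_s,W_c,\downarrow;r](s)\big]. \]
   Context: Setup. $\mathcal M$ finite, $W_s$ an irreducible aperiodic transition matrix on $\mathcal M$; message $M^k$ with law $P_{M_1}(m_1)\prod_{i=2}^kW_s(m_i|m_{i-1})$. $\mathcal X$ a finite abelian group, $\mathcal Z$ finite, $W_c=\{W_c(x,z|x',z')\}$ an irreducible aperiodic transition matrix on $\mathcal X\times\mathcal Z$; noise $(X^n,Z^n)$ with law $P_{X_1Z_1}(x_1,z_1)\prod_{i=2}^nW_c(x_i,z_i|x_{i-1},z_{i-1})$. Channel: input $\tilde x^n$ yields output $(x^n,z^n)$ with probability $P_{X^nZ^n}(x^n-\tilde x^n,z^n)$. $P_j(k,n)$ is the minimum over codes $(\mathsf e:\mathcal M^k\to\mathcal X^n,\ \mathsf d:(\mathcal X\times\mathcal Z)^n\to\mathcal M^k)$ of the average decoding error probability. $R:=\log|\mathcal X|$. Assumption 1: $\sum_xW_c(x,z|x',z')$ does not depend on $x'$; call it $W_{c,Z}(z|z')$. Entrywise powers $a^t$ of transition probabilities are $0$ when $a=0$; $\lambda(A)$ denotes the Perron–Frobenius eigenvalue. $\theta H^{W_s}_{1-\theta}(M):=\log\lambda\big(W_s(m|m')^{1-\theta}\big)$, $\theta H^{W_c,\downarrow}_{1-\theta}(X|Z):=\log\lambda\big(W_c(x,z|x',z')^{1-\theta}W_{c,Z}(z|z')^{\theta}\big)$;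 $H^{W_s}(M):=\lim_{\theta\to0}H^{W_s}_{1-\theta}(M)$, $H^{W_c}(X|Z):=\lim_{\theta\to0}H^{W_c,\downarrow}_{1-\theta}(X|Z)$. $U[W_s,W_c,\downarrow;r](\theta):=r\theta H^{W_s}_{1-\theta}(M)+\theta H^{W_c,\downarrow}_{1-\theta}(X|Z)$. *)

theory Defs
  imports "HOL-Analysis.Analysis"
begin

text \<open>A transition matrix on a finite type is a function W with W a b = W(a|b),
  i.e. the probability of moving to a from b.\<close>

definition stochastic :: "('a::finite \<Rightarrow> 'a \<Rightarrow> real) \<Rightarrow> bool" where
  "stochastic W \<longleftrightarrow> (\<forall>a b. 0 \<le> W a b) \<and> (\<forall>b. (\<Sum>a\<in>UNIV. W a b) = 1)"

definition prob_dist :: "('a::finite \<Rightarrow> real) \<Rightarrow> bool" where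
  "prob_dist P \<longleftrightarrow> (\<forall>a. 0 \<le> P a) \<and> (\<Sum>a\<in>UNIV. P a) = 1"

fun mat_pow :: "nat \<Rightarrow> ('a::finite \<Rightarrow> 'a \<Rightarrow> real) \<Rightarrow> 'a \<Rightarrow> 'a \<Rightarrow> real" where
  "mat_pow 0 W = (\<lambda>a b. if a = b then 1 else 0)"
| "mat_pow (Suc n) W = (\<lambda>a b. \<Sum>c\<in>UNIV. W a c * mat_pow n W c b)"

definition irreducible_chain :: "('a::finite \<Rightarrow> 'a \<Rightarrow> real) \<Rightarrow> bool" where
  "irreducible_chain W \<longleftrightarrow> (\<forall>a b. \<exists>n>0. mat_pow n W a b > 0)"

definition aperiodic_chain :: "('a::finite \<Rightarrow> 'a \<Rightarrow> real) \<Rightarrow> bool" where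
  "aperiodic_chain W \<longleftrightarrow> (\<forall>a. Gcd {n::nat. n > 0 \<and> mat_pow n W a a > 0} = 1)"

definition mat_eigenvalues :: "('a::finite \<Rightarrow> 'a \<Rightarrow> real) \<Rightarrow> complex set" where
  "mat_eigenvalues A = {\<mu>. \<exists>v::'a \<Rightarrow> complex. (\<exists>b. v b \<noteq> 0) \<and>
      (\<forall>a. (\<Sum>b\<in>UNIV. complex_of_real (A a b) * v b) = \<mu> * v a)}"

text \<open>Perron--Frobenius eigenvalue of a nonnegative matrix = its spectral radius.\<close>
definition pf_eigenvalue :: "('a::finite \<Rightarrow> 'a \<Rightarrow> real) \<Rightarrow> real" where
  "pf_eigenvalue A = Max (cmod ` mat_eigenvalues A)"

text \<open>Entrywise powers: Isabelle's powr already satisfies 0 powr t = 0.\<close>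

definition theta_H_src :: "('m::finite \<Rightarrow> 'm \<Rightarrow> real) \<Rightarrow> real \<Rightarrow> real" where
  "theta_H_src Ws \<theta> = ln (pf_eigenvalue (\<lambda>m m'. Ws m m' powr (1 - \<theta>)))"

definition WcZ :: "('x::{finite,zero} \<times> 'z::finite \<Rightarrow> 'x \<times> 'z \<Rightarrow> real) \<Rightarrow> 'z \<Rightarrow> 'z \<Rightarrow> real" where
  "WcZ Wc z z' = (\<Sum>x\<in>UNIV. Wc (x, z) (0, z'))"

definition assumption1 :: "('x::finite \<times> 'z::finite \<Rightarrow> 'x \<times> 'z \<Rightarrow> real) \<Rightarrow> bool" where
  "assumption1 Wc \<longleftrightarrow> (\<forall>z z' x1 x2. (\<Sum>x\<in>UNIV. Wc (x, z) (x1, z')) = (\<Sum>x\<in>UNIV. Wc (x, z) (x2, z')))"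

definition theta_H_ch :: "('x::{finite,zero} \<times> 'z::finite \<Rightarrow> 'x \<times> 'z \<Rightarrow> real) \<Rightarrow> real \<Rightarrow> real" where
  "theta_H_ch Wc \<theta> = ln (pf_eigenvalue
      (\<lambda>(x, z) (x', z'). Wc (x, z) (x', z') powr (1 - \<theta>) * WcZ Wc z z' powr \<theta>))"

definition H_src :: "('m::finite \<Rightarrow> 'm \<Rightarrow> real) \<Rightarrow> real" where
  "H_src Ws = Lim (at 0) (\<lambda>\<theta>. theta_H_src Ws \<theta> / \<theta>)"

definition H_ch :: "('x::{finite,zero} \<times> 'z::finite \<Rightarrow> 'x \<times> 'z \<Rightarrow> real) \<Rightarrow> real" where
  "H_ch Wc = Lim (at 0) (\<lambda>\<theta>. theta_H_ch Wc \<theta> / \<theta>)"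

definition U_fun :: "('m::finite \<Rightarrow> 'm \<Rightarrow> real) \<Rightarrow> ('x::{finite,zero} \<times> 'z::finite \<Rightarrow> 'x \<times> 'z \<Rightarrow> real)
    \<Rightarrow> real \<Rightarrow> real \<Rightarrow> real" where
  "U_fun Ws Wc r \<theta> = r * theta_H_src Ws \<theta> + theta_H_ch Wc \<theta>"

fun chain_prob :: "('a \<Rightarrow> 'a \<Rightarrow> real) \<Rightarrow> 'a \<Rightarrow> 'a list \<Rightarrow> real" where
  "chain_prob W prev [] = 1"
| "chain_prob W prev (a # as) = W a prev * chain_prob W a as"

fun markov_prob :: "('a \<Rightarrow> real) \<Rightarrow> ('a \<Rightarrow> 'a \<Rightarrow> real) \<Rightarrow> 'a list \<Rightarrow> real" where
  "markov_prob P1 W [] = 1"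
| "markov_prob P1 W (a # as) = P1 a * chain_prob W a as"

text \<open>Additive noise channel: input xt, output (x^n, z^n) with prob P_{XZ}(x^n - xt, z^n).\<close>
definition channel_prob :: "('x::ab_group_add \<times> 'z \<Rightarrow> real) \<Rightarrow> ('x \<times> 'z \<Rightarrow> 'x \<times> 'z \<Rightarrow> real)
    \<Rightarrow> 'x list \<Rightarrow> ('x \<times> 'z) list \<Rightarrow> real" where
  "channel_prob PXZ1 Wc xt ys = markov_prob PXZ1 Wc (map (\<lambda>((x, z), xi). (x - xi, z)) (zip ys xt))"

definition error_prob ::
  "('m \<Rightarrow> real) \<Rightarrow> ('m \<Rightarrow> 'm \<Rightarrow> real) \<Rightarrow> ('x::ab_group_add \<times> 'z \<Rightarrow> real) \<Rightarrow> ('x \<times> 'z \<Rightarrow> 'x \<times> 'z \<Rightarrow> real)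
    \<Rightarrow> nat \<Rightarrow> nat \<Rightarrow> ('m list \<Rightarrow> 'x list) \<Rightarrow> (('x \<times> 'z) list \<Rightarrow> 'm list) \<Rightarrow> real" where
  "error_prob PM1 Ws PXZ1 Wc k n e d =
     (\<Sum>ms\<in>{ms. length ms = k}. markov_prob PM1 Ws ms *
        (\<Sum>ys\<in>{ys. length ys = n}. channel_prob PXZ1 Wc (e ms) ys * (if d ys = ms then 0 else 1)))"

definition valid_encoder :: "nat \<Rightarrow> nat \<Rightarrow> ('m list \<Rightarrow> 'x list) \<Rightarrow> bool" where
  "valid_encoder k n e \<longleftrightarrow> (\<forall>ms. length ms = k \<longrightarrow> length (e ms) = n)"

definition Pj ::
  "('m::finite \<Rightarrow> real) \<Rightarrow> ('m \<Rightarrow> 'm \<Rightarrow> real) \<Rightarrow> ('x::{finite,ab_group_add} \<times> 'z::finite \<Rightarrow> real)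
    \<Rightarrow> ('x \<times> 'z \<Rightarrow> 'x \<times> 'z \<Rightarrow> real) \<Rightarrow> nat \<Rightarrow> nat \<Rightarrow> real" where
  "Pj PM1 Ws PXZ1 Wc k n =
     Inf {error_prob PM1 Ws PXZ1 Wc k n e d | e d. valid_encoder k n e}"

definition neg_log_rate :: "real \<Rightarrow> nat \<Rightarrow> ereal" where
  "neg_log_rate p n = (if p = 0 then \<infinity> else ereal (- ln p / real n))"

end

theory Submission
  imports Defs "Jordan_Normal_Form.Spectral_Radius" "HOL-Real_Asymp.Real_Asymp"
begin

text \<open>Fix \<open>s \<in> (0,1)\<close>. Averaging the union bound for MAP decoding over all encoders
  \<open>M\<^sup>k \<rightarrow> X\<^sup>n\<close> and estimating \<open>min 1 y \<le> y powr s\<close> gives Gallager's bound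
  \<open>P_j(k,n) \<le> |X| powr (-s n) \<cdot> (\<Sum>m. P(m) powr (1-s)) \<cdot> (\<Sum>w. P(w) powr (1-s) \<cdot> P(z(w)) powr s)\<close>.
  Under Assumption 1 the \<open>Z\<close>-marginal of the noise is again Markov, so both sums are sums over
  paths of Markov chains with entrywise-powered transition matrices, i.e. sums of entries of matrix
  powers. By the Jordan normal form these grow like the Perron--Frobenius eigenvalue up to a
  polynomial factor, and \<open>-1/n log\<close> of the bound tends to \<open>sR - U(s)\<close>.\<close>

section \<open>Growth of matrix powers\<close>

lemma mat_pow_Suc_right:
  "mat_pow (Suc n) W a b = (\<Sum>c\<in>UNIV. mat_pow n W a c * W c b)"
proof (induction n arbitrary: a b)
  case 0
  have "(\<Sum>c\<in>UNIV. W a c * (if c = b then 1 else 0)) = (\<Sum>c\<in>UNIV. if c = b then W a c else 0)"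
    by (intro sum.cong) auto
  moreover have "(\<Sum>c\<in>UNIV. (if a = c then 1 else 0) * W c b) = (\<Sum>c\<in>UNIV. if a = c then W c b else 0)"
    by (intro sum.cong) auto
  ultimately show ?case by simp
next
  case (Suc n)
  have "mat_pow (Suc (Suc n)) W a b = (\<Sum>c\<in>UNIV. W a c * (\<Sum>d\<in>UNIV. mat_pow n W c d * W d b))"
    by (simp only: mat_pow.simps(2)[of "Suc n"] Suc.IH)
  also have "\<dots> = (\<Sum>c\<in>UNIV. \<Sum>d\<in>UNIV. W a c * mat_pow n W c d * W d b)"
    by (simp add: sum_distrib_left mult.assoc)
  also have "\<dots> = (\<Sum>d\<in>UNIV. (\<Sum>c\<in>UNIV. W a c * mat_pow n W c d) * W d b)"
    by (subst sum.swap) (simp add: sum_distrib_right)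
  finally show ?case by simp
qed

lemma mat_pow_divide:
  "mat_pow k (\<lambda>a b. A a b / t) a b = mat_pow k A a b / t ^ k"
  by (induction k arbitrary: a b) (simp_all add: sum_divide_distrib)

definition matrix_of :: "(nat \<Rightarrow> 'a::finite) \<Rightarrow> ('a \<Rightarrow> 'a \<Rightarrow> real) \<Rightarrow> complex mat" where
  "matrix_of g A = mat CARD('a) CARD('a) (\<lambda>(i, j). complex_of_real (A (g i) (g j)))"

lemma matrix_of_carrier: "matrix_of g A \<in> carrier_mat CARD('a) CARD('a)"
  for A :: "'a::finite \<Rightarrow> 'a \<Rightarrow> real"
  by (simp add: matrix_of_def)

lemma matrix_of_power:
  fixes A :: "'a::finite \<Rightarrow> 'a \<Rightarrow> real"
  assumes g: "bij_betw g {..<CARD('a)} UNIV" and i: "i < CARD('a)" and j: "j < CARD('a)"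
  shows "(matrix_of g A ^\<^sub>m k) $$ (i, j) = complex_of_real (mat_pow k A (g i) (g j))"
  using j
proof (induction k arbitrary: j)
  case 0
  have "inj_on g {..<CARD('a)}" using g bij_betw_def by blast
  with i 0 show ?case by (auto simp: matrix_of_def dest: inj_onD)
next
  case (Suc k)
  have "(matrix_of g A ^\<^sub>m Suc k) $$ (i, j)
      = (\<Sum>l<CARD('a). complex_of_real (mat_pow k A (g i) (g l) * A (g l) (g j)))"
    using i Suc by (simp add: matrix_of_def scalar_prod_def times_mat_def atLeast0LessThan)
  also have "\<dots> = (\<Sum>c\<in>UNIV. complex_of_real (mat_pow k A (g i) c * A c (g j)))"
    using sum.reindex_bij_betw[OF g] by simp
  finally show ?case by (simp only: mat_pow_Suc_right of_real_sum)
qed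

lemma matrix_of_mult_vec:
  fixes A :: "'a::finite \<Rightarrow> 'a \<Rightarrow> real"
  assumes g: "bij_betw g {..<CARD('a)} UNIV" and i: "i < CARD('a)"
  shows "(matrix_of g A *\<^sub>v vec CARD('a) (v \<circ> g)) $ i = (\<Sum>b\<in>UNIV. complex_of_real (A (g i) b) * v b)"
  using i sum.reindex_bij_betw[OF g, of "\<lambda>b. complex_of_real (A (g i) b) * v b"]
  by (simp add: matrix_of_def mult_mat_vec_def scalar_prod_def atLeast0LessThan)

lemma bij_betw_lessThan_inv:
  assumes "bij_betw g {..<n} (UNIV :: 'a set)"
  shows "g (inv_into {..<n} g a) = a" "inv_into {..<n} g a < n"
    "i < n \<Longrightarrow> inv_into {..<n} g (g i) = i"
  using assms by (auto simp: bij_betw_inv_into_right bij_betw_inv_into_left)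
    (metis UNIV_I bij_betw_def inv_into_into lessThan_iff)

lemma matrix_of_eigen_iff:
  fixes A :: "'a::finite \<Rightarrow> 'a \<Rightarrow> real"
  assumes g: "bij_betw g {..<CARD('a)} UNIV"
  shows "matrix_of g A *\<^sub>v vec CARD('a) (v \<circ> g) = \<mu> \<cdot>\<^sub>v vec CARD('a) (v \<circ> g) \<longleftrightarrow>
    (\<forall>a. (\<Sum>b\<in>UNIV. complex_of_real (A a b) * v b) = \<mu> * v a)"
proof
  assume eq: "matrix_of g A *\<^sub>v vec CARD('a) (v \<circ> g) = \<mu> \<cdot>\<^sub>v vec CARD('a) (v \<circ> g)"
  show "\<forall>a. (\<Sum>b\<in>UNIV. complex_of_real (A a b) * v b) = \<mu> * v a"
  proof
    fix a
    let ?i = "inv_into {..<CARD('a)} g a"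
    have "(matrix_of g A *\<^sub>v vec CARD('a) (v \<circ> g)) $ ?i = (\<mu> \<cdot>\<^sub>v vec CARD('a) (v \<circ> g)) $ ?i"
      by (simp only: eq)
    then show "(\<Sum>b\<in>UNIV. complex_of_real (A a b) * v b) = \<mu> * v a"
      by (simp only: matrix_of_mult_vec[OF g bij_betw_lessThan_inv(2)[OF g]])
        (simp add: bij_betw_lessThan_inv[OF g])
  qed
next
  assume ev: "\<forall>a. (\<Sum>b\<in>UNIV. complex_of_real (A a b) * v b) = \<mu> * v a"
  show "matrix_of g A *\<^sub>v vec CARD('a) (v \<circ> g) = \<mu> \<cdot>\<^sub>v vec CARD('a) (v \<circ> g)"
  proof (rule eq_vecI)
    fix i assume "i < dim_vec (\<mu> \<cdot>\<^sub>v vec CARD('a) (v \<circ> g))"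
    then have i: "i < CARD('a)" by simp
    show "(matrix_of g A *\<^sub>v vec CARD('a) (v \<circ> g)) $ i = (\<mu> \<cdot>\<^sub>v vec CARD('a) (v \<circ> g)) $ i"
      by (simp only: matrix_of_mult_vec[OF g i] ev) (simp add: i)
  qed (simp add: matrix_of_def)
qed

lemma vec_comp_nonzero_iff:
  assumes g: "bij_betw g {..<n} UNIV"
  shows "vec n (v \<circ> g) \<noteq> 0\<^sub>v n \<longleftrightarrow> (\<exists>b. v b \<noteq> (0 :: 'b::zero))"
proof
  assume nz: "vec n (v \<circ> g) \<noteq> 0\<^sub>v n"
  show "\<exists>b. v b \<noteq> 0"
  proof (rule ccontr)
    assume "\<not> (\<exists>b. v b \<noteq> 0)"
    then have "vec n (v \<circ> g) = 0\<^sub>v n" by (intro eq_vecI) auto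
    with nz show False ..
  qed
next
  assume "\<exists>b. v b \<noteq> 0"
  then obtain b where "v b \<noteq> 0" by blast
  then have "vec n (v \<circ> g) $ inv_into {..<n} g b \<noteq> 0\<^sub>v n $ inv_into {..<n} g b"
    using bij_betw_lessThan_inv[OF g] by simp
  then show "vec n (v \<circ> g) \<noteq> 0\<^sub>v n" by auto
qed

lemma mat_eigenvalues_matrix_of:
  fixes A :: "'a::finite \<Rightarrow> 'a \<Rightarrow> real"
  assumes g: "bij_betw g {..<CARD('a)} UNIV"
  shows "mat_eigenvalues A = spectrum (matrix_of g A)"
proof -
  let ?N = "CARD('a)"
  let ?M = "matrix_of g A"
  have dim_M: "dim_row ?M = ?N" by (simp add: matrix_of_def)
  note eigen_iff = matrix_of_eigen_iff[OF g] and nonzero_iff = vec_comp_nonzero_iff[OF g]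
  show ?thesis
  proof (intro Set.set_eqI iffI)
    fix \<mu> assume "\<mu> \<in> mat_eigenvalues A"
    then obtain v where "\<exists>b. v b \<noteq> 0" "\<forall>a. (\<Sum>b\<in>UNIV. complex_of_real (A a b) * v b) = \<mu> * v a"
      unfolding mat_eigenvalues_def by blast
    then have "eigenvector ?M (vec ?N (v \<circ> g)) \<mu>"
      unfolding eigenvector_def dim_M eigen_iff nonzero_iff by simp
    then show "\<mu> \<in> spectrum ?M"
      unfolding spectrum_def eigenvalue_def by blast
  next
    fix \<mu> assume "\<mu> \<in> spectrum ?M"
    then obtain w where w: "eigenvector ?M w \<mu>"
      unfolding spectrum_def eigenvalue_def by blast
    define v where "v a = w $ inv_into {..<?N} g a" for a
    have "w = vec ?N (v \<circ> g)"
      using w bij_betw_lessThan_inv(3)[OF g] unfolding eigenvector_def dim_M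
      by (intro eq_vecI) (auto simp: v_def)
    with w have "vec ?N (v \<circ> g) \<noteq> 0\<^sub>v ?N" "?M *\<^sub>v vec ?N (v \<circ> g) = \<mu> \<cdot>\<^sub>v vec ?N (v \<circ> g)"
      unfolding eigenvector_def dim_M by simp_all
    then have "\<exists>b. v b \<noteq> 0" "\<forall>a. (\<Sum>b\<in>UNIV. complex_of_real (A a b) * v b) = \<mu> * v a"
      unfolding eigen_iff nonzero_iff .
    then show "\<mu> \<in> mat_eigenvalues A"
      unfolding mat_eigenvalues_def by blast
  qed
qed

lemma pf_eigenvalue_matrix_of:
  fixes A :: "'a::finite \<Rightarrow> 'a \<Rightarrow> real"
  assumes "bij_betw g {..<CARD('a)} UNIV"
  shows "pf_eigenvalue A = spectral_radius (matrix_of g A)"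
  unfolding pf_eigenvalue_def spectral_radius_def mat_eigenvalues_matrix_of[OF assms] by simp

lemma ex_bij_betw_card_UNIV: "\<exists>g. bij_betw g {..<CARD('a)} (UNIV :: 'a::finite set)"
  using ex_bij_betw_nat_finite[of "UNIV :: 'a set"] by (auto simp: atLeast0LessThan)

lemma finite_mat_eigenvalues: "finite (mat_eigenvalues A)"
  and mat_eigenvalues_nonempty: "mat_eigenvalues A \<noteq> {}"
  for A :: "'a::finite \<Rightarrow> 'a \<Rightarrow> real"
proof -
  obtain g where g: "bij_betw g {..<CARD('a)} (UNIV :: 'a set)"
    using ex_bij_betw_card_UNIV by blast
  show "finite (mat_eigenvalues A)" "mat_eigenvalues A \<noteq> {}"
    unfolding mat_eigenvalues_matrix_of[OF g]
    by (rule card_finite_spectrum(1)[OF matrix_of_carrier], rule spectrum_non_empty[OF matrix_of_carrier]) simp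
qed

lemma norm_le_pf_eigenvalue: "\<mu> \<in> mat_eigenvalues A \<Longrightarrow> cmod \<mu> \<le> pf_eigenvalue A"
  unfolding pf_eigenvalue_def using finite_mat_eigenvalues[of A] by (intro Max_ge) auto

lemma pf_eigenvalue_nonneg: "0 \<le> pf_eigenvalue A"
  using mat_eigenvalues_nonempty[of A] norm_le_pf_eigenvalue[of _ A] norm_ge_zero order_trans by blast

lemma pf_eigenvalue_divide_le:
  fixes A :: "'a::finite \<Rightarrow> 'a \<Rightarrow> real"
  assumes t: "t > 0"
  shows "pf_eigenvalue (\<lambda>a b. A a b / t) \<le> pf_eigenvalue A / t"
  unfolding pf_eigenvalue_def [of "\<lambda>a b. A a b / t"]
proof (subst Max_le_iff, safe)
  fix \<mu> assume "\<mu> \<in> mat_eigenvalues (\<lambda>a b. A a b / t)"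
  then obtain v where v: "\<exists>b. v b \<noteq> 0" "\<And>a. (\<Sum>b\<in>UNIV. complex_of_real (A a b / t) * v b) = \<mu> * v a"
    unfolding mat_eigenvalues_def by blast
  have "(\<Sum>b\<in>UNIV. complex_of_real (A a b) * v b) = (\<mu> * of_real t) * v a" for a
    using v(2)[of a] t by (simp add: sum_divide_distrib[symmetric] field_simps)
  then have "\<mu> * of_real t \<in> mat_eigenvalues A"
    unfolding mat_eigenvalues_def using v(1) by blast
  from norm_le_pf_eigenvalue[OF this] t show "cmod \<mu> \<le> pf_eigenvalue A / t"
    by (simp add: norm_mult field_simps)
qed (use finite_mat_eigenvalues mat_eigenvalues_nonempty in auto)

lemma mat_pow_bound_pf_eigenvalue_le_1:
  fixes A :: "'a::finite \<Rightarrow> 'a \<Rightarrow> real"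
  assumes "pf_eigenvalue A \<le> 1"
  shows "\<exists>C. \<forall>k a b. \<bar>mat_pow k A a b\<bar> \<le> C * (real k + 1) ^ CARD('a)"
proof -
  obtain g where g: "bij_betw g {..<CARD('a)} (UNIV :: 'a set)"
    using ex_bij_betw_card_UNIV by blast
  define h where "h = inv_into {..<CARD('a)} g"
  note gh = bij_betw_lessThan_inv(1)[OF g, folded h_def]
    and hN = bij_betw_lessThan_inv(2)[OF g, folded h_def]
  have "spectral_radius (matrix_of g A) \<le> 1"
    using assms pf_eigenvalue_matrix_of[OF g] by simp
  from spectral_radius_jnf_norm_bound_le_1_upper_triangular[OF matrix_of_carrier this]
  obtain c1 c2 where c: "\<And>k. norm_bound (matrix_of g A ^\<^sub>m k) (c1 + c2 * real k ^ (CARD('a) - 1))"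
    by blast
  have "\<bar>mat_pow k A a b\<bar> \<le> (\<bar>c1\<bar> + \<bar>c2\<bar>) * (real k + 1) ^ CARD('a)" for k a b
  proof -
    have "cmod ((matrix_of g A ^\<^sub>m k) $$ (h a, h b)) \<le> c1 + c2 * real k ^ (CARD('a) - 1)"
      using c[of k] hN[of a] hN[of b] unfolding norm_bound_def by (simp add: matrix_of_def)
    then have "\<bar>mat_pow k A a b\<bar> \<le> c1 + c2 * real k ^ (CARD('a) - 1)"
      by (simp add: matrix_of_power[OF g hN hN] gh)
    also have "\<dots> \<le> \<bar>c1\<bar> * 1 + \<bar>c2\<bar> * (real k + 1) ^ CARD('a)"
      by (intro add_mono mult_mono order.trans[OF power_mono power_increasing]) auto
    also have "\<dots> \<le> (\<bar>c1\<bar> + \<bar>c2\<bar>) * (real k + 1) ^ CARD('a)"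
      unfolding distrib_right by (intro add_mono mult_left_mono) (simp_all add: one_le_power)
    finally show ?thesis .
  qed
  then show ?thesis by blast
qed

text \<open>Since \<open>ln 0 = 0\<close>, replacing a vanishing PF eigenvalue by 1 does not change its logarithm
  but makes it a valid divisor.\<close>
definition growth_rate :: "('a::finite \<Rightarrow> 'a \<Rightarrow> real) \<Rightarrow> real" where
  "growth_rate A = (if pf_eigenvalue A > 0 then pf_eigenvalue A else 1)"

lemma growth_rate_pos: "growth_rate A > 0"
  by (simp add: growth_rate_def)

lemma ln_growth_rate: "ln (growth_rate A) = ln (pf_eigenvalue A)"
  using pf_eigenvalue_nonneg[of A] by (auto simp: growth_rate_def)

lemma mat_pow_growth_bound:
  fixes A :: "'a::finite \<Rightarrow> 'a \<Rightarrow> real"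
  shows "\<exists>C. \<forall>k a b. \<bar>mat_pow k A a b\<bar> \<le> C * (real k + 1) ^ CARD('a) * growth_rate A ^ k"
proof -
  let ?t = "growth_rate A"
  have t: "?t > 0" by (rule growth_rate_pos)
  have "pf_eigenvalue (\<lambda>a b. A a b / ?t) \<le> 1"
    using pf_eigenvalue_divide_le[OF t, of A] pf_eigenvalue_nonneg[of A]
    by (auto simp: growth_rate_def split: if_splits)
  then obtain C where C: "\<And>k a b. \<bar>mat_pow k (\<lambda>a b. A a b / ?t) a b\<bar> \<le> C * (real k + 1) ^ CARD('a)"
    using mat_pow_bound_pf_eigenvalue_le_1 by blast
  have "\<bar>mat_pow k A a b\<bar> \<le> C * (real k + 1) ^ CARD('a) * ?t ^ k" for k a b
  proof -
    have "\<bar>mat_pow k A a b\<bar> / ?t ^ k \<le> C * (real k + 1) ^ CARD('a)"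
      using C[of k a b] t by (simp add: mat_pow_divide abs_divide)
    then show ?thesis
      using t by (simp add: divide_le_eq)
  qed
  then show ?thesis by blast
qed

section \<open>Markov chains\<close>

lemma sum_lists_length_Suc:
  fixes f :: "'a::finite list \<Rightarrow> 'b::comm_monoid_add"
  shows "(\<Sum>xs | length xs = Suc n. f xs) = (\<Sum>a\<in>UNIV. \<Sum>xs | length xs = n. f (a # xs))"
proof -
  have "{xs::'a list. length xs = Suc n} = (\<lambda>(a, xs). a # xs) ` (UNIV \<times> {xs. length xs = n})"
    by (auto simp: length_Suc_conv image_iff)
  moreover have "inj_on (\<lambda>(a, xs). a # xs) (UNIV \<times> {xs::'a list. length xs = n})"
    by (auto simp: inj_on_def)
  ultimately show ?thesis
    by (simp add: sum.reindex sum.cartesian_product case_prod_unfold)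
qed

lemma sum_chain_prob_mat_pow:
  fixes A :: "'a::finite \<Rightarrow> 'a \<Rightarrow> real"
  shows "(\<Sum>xs | length xs = n. chain_prob A p xs) = (\<Sum>b\<in>UNIV. mat_pow n A b p)"
proof (induction n arbitrary: p)
  case (Suc n)
  have "(\<Sum>xs | length xs = Suc n. chain_prob A p xs) = (\<Sum>a\<in>UNIV. A a p * (\<Sum>b\<in>UNIV. mat_pow n A b a))"
    by (simp add: sum_lists_length_Suc sum_distrib_left[symmetric] Suc)
  also have "\<dots> = (\<Sum>a\<in>UNIV. \<Sum>b\<in>UNIV. mat_pow n A b a * A a p)"
    by (simp add: sum_distrib_left mult.commute)
  also have "\<dots> = (\<Sum>b\<in>UNIV. mat_pow (Suc n) A b p)"
    by (subst sum.swap) (simp only: mat_pow_Suc_right)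
  finally show ?case .
qed simp

lemma sum_chain_prob_stochastic:
  assumes "stochastic W"
  shows "(\<Sum>xs | length xs = n. chain_prob W p xs) = 1"
  using assms
  by (induction n arbitrary: p) (simp_all add: sum_lists_length_Suc sum_distrib_left[symmetric] stochastic_def)

lemma sum_markov_prob_prob_dist:
  assumes "prob_dist P1" "stochastic W"
  shows "(\<Sum>xs | length xs = n. markov_prob P1 W xs) = 1"
  using assms by (cases n)
    (simp_all add: sum_lists_length_Suc sum_distrib_left[symmetric] sum_chain_prob_stochastic prob_dist_def)

lemma chain_prob_nonneg: "(\<And>a b. 0 \<le> W a b) \<Longrightarrow> 0 \<le> chain_prob W p xs"
  by (induction xs arbitrary: p) auto

lemma markov_prob_nonneg: "(\<And>a. 0 \<le> P1 a) \<Longrightarrow> (\<And>a b. 0 \<le> W a b) \<Longrightarrow> 0 \<le> markov_prob P1 W xs"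
  by (cases xs) (auto intro!: mult_nonneg_nonneg chain_prob_nonneg)

lemma chain_prob_powr:
  assumes "\<And>a b. 0 \<le> W a b"
  shows "chain_prob W p xs powr u = chain_prob (\<lambda>a b. W a b powr u) p xs"
  using assms by (induction xs arbitrary: p) (auto simp: powr_mult chain_prob_nonneg)

lemma markov_prob_powr:
  assumes "\<And>a. 0 \<le> P1 a" "\<And>a b. 0 \<le> W a b"
  shows "markov_prob P1 W xs powr u = markov_prob (\<lambda>a. P1 a powr u) (\<lambda>a b. W a b powr u) xs"
  using assms by (cases xs) (auto simp: powr_mult chain_prob_nonneg chain_prob_powr)

lemma sum_markov_prob_growth_bound:
  fixes A :: "'a::finite \<Rightarrow> 'a \<Rightarrow> real"
  shows "\<exists>D>0. \<forall>k. (\<Sum>xs | length xs = k. markov_prob Q A xs) \<le> D * (real k + 1) ^ CARD('a) * growth_rate A ^ k"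
proof -
  obtain C where C: "\<And>k a b. \<bar>mat_pow k A a b\<bar> \<le> C * (real k + 1) ^ CARD('a) * growth_rate A ^ k"
    using mat_pow_growth_bound[of A] by blast
  have t: "growth_rate A > 0" by (rule growth_rate_pos)
  define D where "D = max 1 ((\<Sum>a\<in>UNIV. \<bar>Q a\<bar>) * real CARD('a) * \<bar>C\<bar> / growth_rate A)"
  have "(\<Sum>xs | length xs = k. markov_prob Q A xs) \<le> D * (real k + 1) ^ CARD('a) * growth_rate A ^ k" for k
  proof (cases k)
    case (Suc m)
    let ?B = "\<bar>C\<bar> * (real k + 1) ^ CARD('a) * growth_rate A ^ m"
    have "\<bar>mat_pow m A b a\<bar> \<le> ?B" for a b
    proof -
      have "C * (real m + 1) ^ CARD('a) * growth_rate A ^ m \<le> \<bar>C\<bar> * (real m + 1) ^ CARD('a) * growth_rate A ^ m"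
        using t by (intro mult_right_mono) auto
      also have "\<dots> \<le> ?B"
        using t Suc by (intro mult_right_mono mult_left_mono power_mono) auto
      finally show ?thesis using C[of m b a] by linarith
    qed
    then have col: "\<bar>\<Sum>b\<in>UNIV. mat_pow m A b a\<bar> \<le> real CARD('a) * ?B" for a
      using order_trans[OF sum_abs sum_mono[of UNIV "\<lambda>b. \<bar>mat_pow m A b a\<bar>" "\<lambda>_. ?B"]] by simp
    have "(\<Sum>xs | length xs = k. markov_prob Q A xs) = (\<Sum>a\<in>UNIV. Q a * (\<Sum>b\<in>UNIV. mat_pow m A b a))"
      by (simp add: Suc sum_lists_length_Suc sum_distrib_left[symmetric] sum_chain_prob_mat_pow)
    also have "\<dots> \<le> (\<Sum>a\<in>UNIV. \<bar>Q a\<bar> * (real CARD('a) * ?B))"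
    proof (rule sum_mono)
      fix a
      have "\<bar>Q a * (\<Sum>b\<in>UNIV. mat_pow m A b a)\<bar> \<le> \<bar>Q a\<bar> * (real CARD('a) * ?B)"
        unfolding abs_mult by (rule mult_left_mono) (use col in auto)
      then show "Q a * (\<Sum>b\<in>UNIV. mat_pow m A b a) \<le> \<bar>Q a\<bar> * (real CARD('a) * ?B)"
        by linarith
    qed
    also have "\<dots> = (\<Sum>a\<in>UNIV. \<bar>Q a\<bar>) * (real CARD('a) * ?B)"
      by (simp add: sum_distrib_right)
    also have "\<dots> = (\<Sum>a\<in>UNIV. \<bar>Q a\<bar>) * real CARD('a) * \<bar>C\<bar> / growth_rate A * (real k + 1) ^ CARD('a) * growth_rate A ^ k"
      using t unfolding Suc power_Suc by (simp add: field_simps)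
    also have "\<dots> \<le> D * (real k + 1) ^ CARD('a) * growth_rate A ^ k"
      using t by (intro mult_right_mono) (auto simp: D_def)
    finally show ?thesis .
  qed (simp add: D_def)
  moreover have "D > 0" by (simp add: D_def)
  ultimately show ?thesis by blast
qed

section \<open>The additive noise channel\<close>

definition marginal_Z :: "('x::finite \<times> 'z \<Rightarrow> real) \<Rightarrow> 'z \<Rightarrow> real" where
  "marginal_Z P z = (\<Sum>x\<in>UNIV. P (x, z))"

lemma sum_fst_eq_WcZ:
  assumes "assumption1 Wc"
  shows "(\<Sum>x\<in>UNIV. Wc (x, z) (x0, z0)) = WcZ Wc z z0"
  using assms unfolding assumption1_def WcZ_def by metis

lemma WcZ_nonneg: "(\<And>a b. 0 \<le> Wc a b) \<Longrightarrow> 0 \<le> WcZ Wc z z'"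
  unfolding WcZ_def by (simp add: sum_nonneg)

lemma marginal_Z_nonneg: "(\<And>a. 0 \<le> P a) \<Longrightarrow> 0 \<le> marginal_Z P z"
  unfolding marginal_Z_def by (simp add: sum_nonneg)

lemma sum_chain_prob_zip:
  fixes Wc :: "'x::{finite,zero} \<times> 'z::finite \<Rightarrow> 'x \<times> 'z \<Rightarrow> real"
  assumes "assumption1 Wc"
  shows "(\<Sum>xs | length xs = length zs. chain_prob Wc (x0, z0) (zip xs zs)) = chain_prob (WcZ Wc) z0 zs"
  by (induction zs arbitrary: x0 z0)
    (simp_all add: sum_lists_length_Suc sum_distrib_left[symmetric] sum_distrib_right[symmetric]
      sum_fst_eq_WcZ[OF assms])

lemma sum_markov_prob_zip:
  fixes Wc :: "'x::{finite,zero} \<times> 'z::finite \<Rightarrow> 'x \<times> 'z \<Rightarrow> real"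
  assumes "assumption1 Wc"
  shows "(\<Sum>xs | length xs = length zs. markov_prob P Wc (zip xs zs)) = markov_prob (marginal_Z P) (WcZ Wc) zs"
  by (cases zs)
    (simp_all add: sum_lists_length_Suc sum_distrib_left[symmetric] sum_distrib_right[symmetric]
      sum_chain_prob_zip[OF assms] marginal_Z_def)

definition noise :: "('x::ab_group_add \<times> 'z) list \<Rightarrow> 'x list \<Rightarrow> ('x \<times> 'z) list" where
  "noise ys xt = map (\<lambda>((x, z), xi). (x - xi, z)) (zip ys xt)"

lemma channel_prob_eq_noise: "channel_prob P W xt ys = markov_prob P W (noise ys xt)"
  by (simp add: channel_prob_def noise_def)

lemma map_snd_noise: "length ys = length xt \<Longrightarrow> map snd (noise ys xt) = map snd ys"
  by (induction ys xt rule: list_induct2) (auto simp: noise_def)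

lemma sum_noise_shift:
  fixes f :: "('x::ab_group_add \<times> 'z) list \<Rightarrow> real"
  assumes "length xt = n"
  shows "(\<Sum>ys | length ys = n. f (noise ys xt)) = (\<Sum>w | length w = n. f w)"
proof (rule sum.reindex_bij_betw, rule bij_betw_byWitness)
  let ?add = "\<lambda>w. map (\<lambda>((x, z), xi). (x + xi, z)) (zip w xt)"
  have "length w = length xt \<Longrightarrow> noise (?add w) xt = w" for w
    by (induction w xt rule: list_induct2) (auto simp: noise_def)
  moreover have "length ys = length xt \<Longrightarrow> ?add (noise ys xt) = ys" for ys
    by (induction ys xt rule: list_induct2) (auto simp: noise_def)
  ultimately show "\<forall>ys\<in>{ys. length ys = n}. ?add (noise ys xt) = ys"
    "\<forall>w\<in>{w. length w = n}. noise (?add w) xt = w"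
    "(\<lambda>ys. noise ys xt) ` {ys. length ys = n} \<subseteq> {w. length w = n}"
    "?add ` {w. length w = n} \<subseteq> {ys. length ys = n}"
    using assms by (auto simp: noise_def)
qed

text \<open>This is where Assumption 1 enters: the side information \<open>Z\<^sup>n\<close> is itself a Markov chain.\<close>
lemma sum_noise_codewords:
  fixes Wc :: "'x::{finite,ab_group_add} \<times> 'z::finite \<Rightarrow> 'x \<times> 'z \<Rightarrow> real"
  assumes A1: "assumption1 Wc" and ys: "length ys = n"
  shows "(\<Sum>xt | length xt = n. markov_prob P Wc (noise ys xt)) = markov_prob (marginal_Z P) (WcZ Wc) (map snd ys)"
proof -
  let ?sub = "\<lambda>xt::'x list. map2 (-) (map fst ys) xt"
  have "length as = length xt \<Longrightarrow> map2 (-) as (map2 (-) as xt) = xt" for as xt :: "'x list"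
    by (induction as xt rule: list_induct2) auto
  then have inv: "length xt = n \<Longrightarrow> ?sub (?sub xt) = xt" for xt
    using ys by simp
  have "length ys' = length xt \<Longrightarrow> noise ys' xt = zip (map2 (-) (map fst ys') xt) (map snd ys')"
    for ys' :: "('x \<times> 'z) list" and xt
    by (induction ys' xt rule: list_induct2) (auto simp: noise_def)
  then have "(\<Sum>xt | length xt = n. markov_prob P Wc (noise ys xt))
      = (\<Sum>xt | length xt = n. markov_prob P Wc (zip (?sub xt) (map snd ys)))"
    using ys by (intro sum.cong) auto
  also have "\<dots> = (\<Sum>xs | length xs = n. markov_prob P Wc (zip xs (map snd ys)))"
    by (rule sum.reindex_bij_betw, rule bij_betw_byWitness[where f'="?sub"]) (use ys inv in auto)
  also have "\<dots> = markov_prob (marginal_Z P) (WcZ Wc) (map snd ys)"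
    using sum_markov_prob_zip[OF A1, of P "map snd ys"] ys by simp
  finally show ?thesis .
qed

definition tilted :: "('x::{finite,zero} \<times> 'z::finite \<Rightarrow> 'x \<times> 'z \<Rightarrow> real) \<Rightarrow> real \<Rightarrow> 'x \<times> 'z \<Rightarrow> 'x \<times> 'z \<Rightarrow> real" where
  "tilted Wc s = (\<lambda>(x, z) (x', z'). Wc (x, z) (x', z') powr (1 - s) * WcZ Wc z z' powr s)"

lemma tilted_apply: "tilted Wc s a b = Wc a b powr (1 - s) * WcZ Wc (snd a) (snd b) powr s"
  by (cases a, cases b) (simp add: tilted_def)

lemma chain_prob_tilted:
  fixes Wc :: "'x::{finite,zero} \<times> 'z::finite \<Rightarrow> 'x \<times> 'z \<Rightarrow> real"
  assumes "\<And>a b. 0 \<le> Wc a b"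
  shows "chain_prob Wc p w powr (1 - s) * chain_prob (WcZ Wc) (snd p) (map snd w) powr s
       = chain_prob (tilted Wc s) p w"
  by (induction w arbitrary: p)
    (simp_all add: assms powr_mult chain_prob_nonneg WcZ_nonneg tilted_apply mult_ac)

lemma markov_prob_tilted:
  fixes Wc :: "'x::{finite,zero} \<times> 'z::finite \<Rightarrow> 'x \<times> 'z \<Rightarrow> real"
  assumes "\<And>a b. 0 \<le> Wc a b" and "\<And>a. 0 \<le> P a"
  shows "markov_prob P Wc w powr (1 - s) * markov_prob (marginal_Z P) (WcZ Wc) (map snd w) powr s
       = markov_prob (\<lambda>a. P a powr (1 - s) * marginal_Z P (snd a) powr s) (tilted Wc s) w"
  using chain_prob_tilted[where Wc = Wc, OF assms(1)]
  by (cases w) (simp_all add: assms powr_mult chain_prob_nonneg WcZ_nonneg marginal_Z_nonneg mult_ac)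

section \<open>Random coding\<close>

lemma card_PiE_remove:
  assumes "finite K" "m \<in> K"
  shows "card (PiE K (\<lambda>_. X)) = card X * card (PiE (K - {m}) (\<lambda>_. X))"
proof -
  have "card K = Suc (card (K - {m}))"
    using card_Suc_Diff1[OF assms] by simp
  then show ?thesis using assms by (simp add: card_PiE) (metis power_Suc)
qed

lemma sum_PiE_update:
  assumes "m \<in> K"
  shows "(\<Sum>e\<in>PiE K B. f e) = (\<Sum>x\<in>B m. \<Sum>e'\<in>PiE (K - {m}) B. f (e'(m := x)))"
proof -
  have K: "K = insert m (K - {m})" using assms by blast
  have "(\<Sum>e\<in>PiE K B. f e) = (\<Sum>e\<in>(\<lambda>(y, g). g(m := y)) ` (B m \<times> PiE (K - {m}) B). f e)"
    by (subst K, subst PiE_insert_eq) simp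
  also have "\<dots> = (\<Sum>(y, g)\<in>B m \<times> PiE (K - {m}) B. f (g(m := y)))"
    by (subst sum.reindex[OF inj_combinator]) (simp_all add: case_prod_unfold)
  also have "\<dots> = (\<Sum>x\<in>B m. \<Sum>e'\<in>PiE (K - {m}) B. f (e'(m := x)))"
    by (rule sum.cartesian_product[symmetric])
  finally show ?thesis .
qed

lemma sum_PiE_coordinate:
  fixes g :: "'a \<Rightarrow> real"
  assumes "finite K" "m \<in> K"
  shows "real (card X) * (\<Sum>e\<in>PiE K (\<lambda>_. X). g (e m)) = real (card (PiE K (\<lambda>_. X))) * (\<Sum>x\<in>X. g x)"
proof -
  have "(\<Sum>e\<in>PiE K (\<lambda>_. X). g (e m)) = real (card (PiE (K - {m}) (\<lambda>_. X))) * (\<Sum>x\<in>X. g x)"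
    by (simp add: sum_PiE_update[OF assms(2)] sum_distrib_left)
  then show ?thesis
    by (simp add: card_PiE_remove[OF assms])
qed

lemma sum_PiE_sum_coordinates:
  fixes f :: "'k \<Rightarrow> 'a \<Rightarrow> real"
  assumes "finite K"
  shows "real (card X) * (\<Sum>e\<in>PiE K (\<lambda>_. X). \<Sum>m\<in>K. f m (e m))
       = real (card (PiE K (\<lambda>_. X))) * (\<Sum>m\<in>K. \<Sum>x\<in>X. f m x)"
proof -
  have "real (card X) * (\<Sum>e\<in>PiE K (\<lambda>_. X). \<Sum>m\<in>K. f m (e m))
      = (\<Sum>m\<in>K. real (card X) * (\<Sum>e\<in>PiE K (\<lambda>_. X). f m (e m)))"
    by (simp add: sum.swap[of _ "PiE K (\<lambda>_. X)"] sum_distrib_left)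
  also have "\<dots> = (\<Sum>m\<in>K. real (card (PiE K (\<lambda>_. X))) * (\<Sum>x\<in>X. f m x))"
    by (intro sum.cong refl sum_PiE_coordinate[OF assms])
  finally show ?thesis by (simp add: sum_distrib_left)
qed

lemma sum_min_one_le:
  fixes f :: "'a \<Rightarrow> real"
  assumes "finite A"
  shows "(\<Sum>a\<in>A. min 1 (f a)) \<le> min (real (card A)) (\<Sum>a\<in>A. f a)"
  using sum_mono[of A "\<lambda>a. min 1 (f a)" "\<lambda>_. 1"] sum_mono[of A "\<lambda>a. min 1 (f a)" f] by simp

lemma min_one_le_powr:
  fixes y s :: real
  assumes "0 \<le> y" "0 < s" "s < 1"
  shows "min 1 y \<le> y powr s"
proof (cases "y \<ge> 1")
  case True
  then show ?thesis using ge_one_powr_ge_zero[of y s] assms by simp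
next
  case False
  have "y powr 1 \<le> y powr s" using assms False by (intro powr_mono') auto
  then show ?thesis using assms by simp
qed

text \<open>Gallager's \<open>\<rho>\<close>-trick, with \<open>\<rho> = s/(1-s)\<close>.\<close>
lemma mult_min_one_le_powr:
  fixes t y q s :: real
  assumes t: "0 \<le> t" and y: "0 \<le> y" and q: "t * y \<le> q" and s: "0 < s" "s < 1"
  shows "t * min 1 y \<le> t powr (1 - s) * q powr s"
proof (cases "t = 0")
  case False
  with t have t: "t > 0" by simp
  then have q0: "0 \<le> q" using q y by (smt (verit) mult_nonneg_nonneg)
  have "min 1 y \<le> (q / t) powr s"
    using min_one_le_powr[OF y s] powr_mono2[of s y "q / t"] q t y s
    by (simp add: le_divide_eq mult.commute)
  then have "t * min 1 y \<le> t * (q / t) powr s"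
    using t by simp
  also have "\<dots> = t powr (1 - s) * q powr s"
    using t q0 by (simp add: powr_divide powr_diff field_simps)
  finally show ?thesis .
qed simp

lemma ex_le_average:
  fixes f :: "'a \<Rightarrow> real"
  assumes "finite A" "A \<noteq> {}" "(\<Sum>a\<in>A. f a) \<le> real (card A) * b"
  shows "\<exists>a\<in>A. f a \<le> b"
proof (rule ccontr)
  assume "\<not> (\<exists>a\<in>A. f a \<le> b)"
  then have "(\<Sum>a\<in>A. b) < (\<Sum>a\<in>A. f a)"
    using assms by (intro sum_strict_mono) auto
  with assms show False by simp
qed

lemma ex_maximizer:
  fixes f :: "'k \<Rightarrow> 'b \<Rightarrow> real"
  assumes "finite K" "K \<noteq> {}"
  shows "\<exists>d. \<forall>y. d y \<in> K \<and> (\<forall>m\<in>K. f m y \<le> f (d y) y)"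
proof -
  have "\<exists>m. m \<in> K \<and> (\<forall>m'\<in>K. f m' y \<le> f m y)" for y
  proof -
    have "Max ((\<lambda>m. f m y) ` K) \<in> (\<lambda>m. f m y) ` K"
      using assms by (intro Max_in) auto
    then obtain m where "m \<in> K" "f m y = Max ((\<lambda>m. f m y) ` K)" by auto
    then show ?thesis using assms(1) by auto
  qed
  then show ?thesis by (intro choice) blast
qed

text \<open>Averaging the union bound over all encoders \<open>e \<in> K \<rightarrow> X\<close>, for a fixed message \<open>m\<close> and output.\<close>
lemma union_bound_average:
  fixes t :: "'a \<Rightarrow> real" and v :: "'k \<Rightarrow> 'a \<Rightarrow> real"
  assumes K: "finite K" "m \<in> K" and X: "finite X" "X \<noteq> {}"
    and t: "\<And>x. 0 \<le> t x" and v: "\<And>m' x. 0 \<le> v m' x"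
    and vQ: "(\<Sum>m'\<in>K. \<Sum>x\<in>X. v m' x) \<le> Q" and s: "0 < s" "s < 1"
  shows "(\<Sum>e\<in>PiE K (\<lambda>_. X). t (e m) * min 1 (\<Sum>m'\<in>K - {m}. if t (e m) \<le> v m' (e m') then 1 else 0))
    \<le> real (card (PiE K (\<lambda>_. X))) / real (card X) * (Q / real (card X)) powr s * (\<Sum>x\<in>X. t x powr (1 - s))"
proof -
  let ?N = "real (card X)"
  let ?E' = "PiE (K - {m}) (\<lambda>_. X)"
  let ?c = "real (card ?E')"
  define T where "T x e' = (\<Sum>m'\<in>K - {m}. if t x \<le> v m' (e' m') then 1 else 0 :: real)" for x e'
  have N: "?N > 0" using X by (simp add: card_gt_0_iff)
  have c: "?c > 0" using K X by (simp add: card_gt_0_iff finite_PiE PiE_eq_empty_iff)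
  have per_codeword: "(\<Sum>e'\<in>?E'. t x * min 1 (T x e')) \<le> ?c * (t x powr (1 - s) * (Q / ?N) powr s)" for x
  proof -
    have "?N * (\<Sum>e'\<in>?E'. T x e') = ?c * (\<Sum>m'\<in>K - {m}. \<Sum>x'\<in>X. if t x \<le> v m' x' then 1 else 0)"
      unfolding T_def using K by (intro sum_PiE_sum_coordinates) simp
    moreover have "t x * (\<Sum>m'\<in>K - {m}. \<Sum>x'\<in>X. if t x \<le> v m' x' then 1 else 0) \<le> Q"
    proof -
      have "t x * (\<Sum>m'\<in>K - {m}. \<Sum>x'\<in>X. if t x \<le> v m' x' then 1 else 0) \<le> (\<Sum>m'\<in>K - {m}. \<Sum>x'\<in>X. v m' x')"
        unfolding sum_distrib_left by (intro sum_mono) (simp add: v)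
      also have "\<dots> \<le> (\<Sum>m'\<in>K. \<Sum>x'\<in>X. v m' x')"
        using K by (intro sum_mono2) (auto intro: sum_nonneg v)
      finally show ?thesis using vQ by linarith
    qed
    ultimately have avg: "t x * ((\<Sum>e'\<in>?E'. T x e') / ?c) \<le> Q / ?N"
      using N c by (simp add: field_simps)
    have "(\<Sum>e'\<in>?E'. t x * min 1 (T x e')) = t x * (\<Sum>e'\<in>?E'. min 1 (T x e'))"
      by (simp add: sum_distrib_left)
    also have "\<dots> \<le> t x * min ?c (\<Sum>e'\<in>?E'. T x e')"
      using K X by (intro mult_left_mono sum_min_one_le) (simp_all add: t finite_PiE)
    also have "\<dots> = ?c * (t x * min 1 ((\<Sum>e'\<in>?E'. T x e') / ?c))"
      using c min_mult_distrib_left[of ?c 1 "(\<Sum>e'\<in>?E'. T x e') / ?c"] by simp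
    also have "\<dots> \<le> ?c * (t x powr (1 - s) * (Q / ?N) powr s)"
      using c by (intro mult_left_mono mult_min_one_le_powr[OF t _ avg s])
        (simp_all add: T_def sum_nonneg)
    finally show ?thesis .
  qed
  have "(\<Sum>e\<in>PiE K (\<lambda>_. X). t (e m) * min 1 (\<Sum>m'\<in>K - {m}. if t (e m) \<le> v m' (e m') then 1 else 0))
      = (\<Sum>x\<in>X. \<Sum>e'\<in>?E'. t x * min 1 (T x e'))"
    unfolding sum_PiE_update[OF K(2)] T_def
    by (intro sum.cong refl arg_cong2[where f = "(*)"] arg_cong2[where f = min]) auto
  also have "\<dots> \<le> (\<Sum>x\<in>X. ?c * (t x powr (1 - s) * (Q / ?N) powr s))"
    by (intro sum_mono per_codeword)
  also have "\<dots> = real (card (PiE K (\<lambda>_. X))) / ?N * (Q / ?N) powr s * (\<Sum>x\<in>X. t x powr (1 - s))"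
    using N by (simp add: card_PiE_remove[OF K] sum_distrib_left sum_distrib_right mult_ac)
  finally show ?thesis .
qed

lemma map_decoder_union_bound:
  fixes f :: "'k \<Rightarrow> 'b \<Rightarrow> real"
  assumes K: "finite K" "K \<noteq> {}" and f: "\<And>m y. 0 \<le> f m y"
  shows "\<exists>d. (\<Sum>m\<in>K. \<Sum>y\<in>Y. f m y * (if d y = m then 0 else 1))
    \<le> (\<Sum>m\<in>K. \<Sum>y\<in>Y. f m y * min 1 (\<Sum>m'\<in>K - {m}. if f m y \<le> f m' y then 1 else 0))"
proof -
  obtain d where d: "\<And>y. d y \<in> K \<and> (\<forall>m\<in>K. f m y \<le> f (d y) y)"
    using ex_maximizer[OF K, of f] by blast
  have "(if d y = m then 0 else 1) \<le> min 1 (\<Sum>m'\<in>K - {m}. if f m y \<le> f m' y then 1 else 0 :: real)"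
    if "m \<in> K" for m y
  proof (cases "d y = m")
    case False
    then have "d y \<in> K - {m}" using d by auto
    then have "(if f m y \<le> f (d y) y then 1 else 0 :: real) \<le> (\<Sum>m'\<in>K - {m}. if f m y \<le> f m' y then 1 else 0)"
      by (rule member_le_sum) (use K in auto)
    with False d[of y] that show ?thesis by simp
  qed (simp add: sum_nonneg)
  then show ?thesis
    by (intro exI[of _ d] sum_mono mult_left_mono) (simp_all add: f)
qed

text \<open>Gallager's random coding bound for joint source-channel coding with MAP decoding.\<close>
lemma random_coding_bound:
  fixes P :: "'k \<Rightarrow> real" and W :: "'a \<Rightarrow> 'b \<Rightarrow> real"
  assumes K: "finite K" "K \<noteq> {}" and X: "finite X" "X \<noteq> {}"
    and P: "\<And>m. 0 \<le> P m" "sum P K = 1" and W: "\<And>x y. 0 \<le> W x y" and s: "0 < s" "s < 1"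
  shows "\<exists>e d. (\<forall>m\<in>K. e m \<in> X) \<and>
    (\<Sum>m\<in>K. \<Sum>y\<in>Y. P m * W (e m) y * (if d y = m then 0 else 1))
      \<le> (\<Sum>m\<in>K. P m powr (1 - s)) *
         (\<Sum>x\<in>X. \<Sum>y\<in>Y. W x y powr (1 - s) * ((\<Sum>x'\<in>X. W x' y) / real (card X)) powr s) / real (card X)"
    (is "\<exists>e d. _ \<and> _ \<le> ?B")
proof -
  let ?E = "PiE K (\<lambda>_. X)"
  let ?N = "real (card X)"
  define G where "G e = (\<Sum>m\<in>K. \<Sum>y\<in>Y. P m * W (e m) y *
      min 1 (\<Sum>m'\<in>K - {m}. if P m * W (e m) y \<le> P m' * W (e m') y then 1 else 0))" for e
  have "(\<Sum>e\<in>?E. G e) = (\<Sum>m\<in>K. \<Sum>y\<in>Y. \<Sum>e\<in>?E. P m * W (e m) y *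
      min 1 (\<Sum>m'\<in>K - {m}. if P m * W (e m) y \<le> P m' * W (e m') y then 1 else 0))"
    unfolding G_def by (simp add: sum.swap[of _ ?E])
  also have "\<dots> \<le> (\<Sum>m\<in>K. \<Sum>y\<in>Y. real (card ?E) / ?N * ((\<Sum>x'\<in>X. W x' y) / ?N) powr s *
      (\<Sum>x\<in>X. (P m * W x y) powr (1 - s)))"
  proof (intro sum_mono union_bound_average[OF K(1) _ X _ _ _ s])
    fix y
    show "(\<Sum>m'\<in>K. \<Sum>x\<in>X. P m' * W x y) \<le> (\<Sum>x'\<in>X. W x' y)"
      by (simp add: sum_distrib_right[symmetric] sum_distrib_left[symmetric] P)
  qed (simp_all add: P W)
  also have "\<dots> = (\<Sum>m\<in>K. P m powr (1 - s)) * (real (card ?E) / ?N *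
      (\<Sum>y\<in>Y. \<Sum>x\<in>X. W x y powr (1 - s) * ((\<Sum>x'\<in>X. W x' y) / ?N) powr s))"
    unfolding sum_distrib_right
    by (intro sum.cong refl) (simp add: powr_mult P W sum_distrib_left sum_divide_distrib mult_ac)
  also have "\<dots> = real (card ?E) * ?B"
    using sum.swap[of "\<lambda>x y. W x y powr (1 - s) * ((\<Sum>x'\<in>X. W x' y) / ?N) powr s" Y X] by simp
  finally have "(\<Sum>e\<in>?E. G e) \<le> real (card ?E) * ?B" .
  moreover have "finite ?E" "?E \<noteq> {}"
    using K X by (simp_all add: finite_PiE PiE_eq_empty_iff)
  ultimately obtain e where e: "e \<in> ?E" "G e \<le> ?B"
    using ex_le_average by blast
  obtain d where "(\<Sum>m\<in>K. \<Sum>y\<in>Y. P m * W (e m) y * (if d y = m then 0 else 1)) \<le> G e"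
    using map_decoder_union_bound[OF K, of "\<lambda>m y. P m * W (e m) y" Y] unfolding G_def
    by (auto simp: P W)
  moreover have "\<forall>m\<in>K. e m \<in> X"
    using e(1) by (auto intro: PiE_mem)
  ultimately show ?thesis
    using e(2) by (intro exI[of _ e] exI[of _ d]) simp
qed

section \<open>The error exponent\<close>

lemma finite_lists_length: "finite {xs :: 'a::finite list. length xs = n}"
  using finite_lists_length_eq[of "UNIV :: 'a set" n] by simp

lemma error_prob_nonneg:
  assumes "prob_dist PM1" "stochastic Ws" "prob_dist PXZ1" "stochastic Wc"
  shows "0 \<le> error_prob PM1 Ws PXZ1 Wc k n e d"
  using assms unfolding error_prob_def channel_prob_def prob_dist_def stochastic_def
  by (intro sum_nonneg mult_nonneg_nonneg markov_prob_nonneg) auto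

lemma Pj_nonneg:
  fixes PXZ1 :: "'x::{finite,ab_group_add} \<times> 'z::finite \<Rightarrow> real"
  assumes "prob_dist PM1" "stochastic Ws" "prob_dist PXZ1" "stochastic Wc"
  shows "0 \<le> Pj PM1 Ws PXZ1 Wc k n"
  unfolding Pj_def
proof (rule cInf_greatest)
  have "valid_encoder k n (\<lambda>_. replicate n (0::'x))" by (simp add: valid_encoder_def)
  then show "{error_prob PM1 Ws PXZ1 Wc k n e d |e d. valid_encoder k n e} \<noteq> {}" by blast
qed (use error_prob_nonneg[OF assms] in auto)

lemma Pj_le_error_prob:
  fixes PXZ1 :: "'x::{finite,ab_group_add} \<times> 'z::finite \<Rightarrow> real"
  assumes "prob_dist PM1" "stochastic Ws" "prob_dist PXZ1" "stochastic Wc" "valid_encoder k n e"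
  shows "Pj PM1 Ws PXZ1 Wc k n \<le> error_prob PM1 Ws PXZ1 Wc k n e d"
  unfolding Pj_def
  by (rule cInf_lower) (use assms error_prob_nonneg[OF assms(1-4)] in \<open>auto intro!: bdd_belowI\<close>)

lemma sum_channel_prob_powr:
  fixes PXZ1 :: "'x::{finite,ab_group_add} \<times> 'z::finite \<Rightarrow> real" and n :: nat
  assumes px: "prob_dist PXZ1" and wc: "stochastic Wc" and A1: "assumption1 Wc"
  defines "Xn \<equiv> {xt :: 'x list. length xt = n}" and "Yn \<equiv> {ys :: ('x \<times> 'z) list. length ys = n}"
  shows "(\<Sum>xt\<in>Xn. \<Sum>ys\<in>Yn. channel_prob PXZ1 Wc xt ys powr (1 - s) *
      ((\<Sum>xt'\<in>Xn. channel_prob PXZ1 Wc xt' ys) / real (card Xn)) powr s)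
    = real (card Xn) powr (1 - s) * (\<Sum>w\<in>Yn. markov_prob PXZ1 Wc w powr (1 - s) *
        markov_prob (marginal_Z PXZ1) (WcZ Wc) (map snd w) powr s)"
    (is "?L = _ * ?SC")
proof -
  let ?N = "real (card Xn)" and ?PZ = "markov_prob (marginal_Z PXZ1) (WcZ Wc)"
  have N: "?N > 0"
    unfolding Xn_def using card_lists_length_eq[of "UNIV :: 'x set" n] by simp
  have PZ0: "0 \<le> ?PZ w" for w
    using px wc unfolding prob_dist_def stochastic_def
    by (intro markov_prob_nonneg marginal_Z_nonneg WcZ_nonneg) auto
  have output_law: "(\<Sum>xt'\<in>Xn. channel_prob PXZ1 Wc xt' ys) = ?PZ (map snd ys)" if "ys \<in> Yn" for ys
    using sum_noise_codewords[OF A1] that unfolding channel_prob_eq_noise Xn_def Yn_def by simp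
  have shift: "(\<Sum>ys\<in>Yn. channel_prob PXZ1 Wc xt ys powr (1 - s) * ?PZ (map snd ys) powr s) = ?SC"
    if "xt \<in> Xn" for xt
  proof -
    have "(\<Sum>ys\<in>Yn. channel_prob PXZ1 Wc xt ys powr (1 - s) * ?PZ (map snd ys) powr s)
        = (\<Sum>ys\<in>Yn. markov_prob PXZ1 Wc (noise ys xt) powr (1 - s) * ?PZ (map snd (noise ys xt)) powr s)"
      using that by (intro sum.cong) (simp_all add: Xn_def Yn_def channel_prob_eq_noise map_snd_noise)
    also have "\<dots> = ?SC"
      using that unfolding Yn_def Xn_def by (intro sum_noise_shift) simp
    finally show ?thesis .
  qed
  have "?L = (\<Sum>xt\<in>Xn. ?N powr (- s) * (\<Sum>ys\<in>Yn. channel_prob PXZ1 Wc xt ys powr (1 - s) * ?PZ (map snd ys) powr s))"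
    unfolding sum_distrib_left using N
    by (intro sum.cong refl) (simp add: output_law PZ0 powr_divide powr_minus_divide)
  also have "\<dots> = ?N * ?N powr (- s) * ?SC"
    by (simp add: shift)
  also have "?N * ?N powr (- s) = ?N powr (1 - s)"
    using N by (simp add: powr_diff powr_minus_divide)
  finally show ?thesis .
qed

lemma Pj_random_coding_bound:
  fixes PM1 :: "'m::finite \<Rightarrow> real" and PXZ1 :: "'x::{finite,ab_group_add} \<times> 'z::finite \<Rightarrow> real"
  assumes pm: "prob_dist PM1" and ws: "stochastic Ws" and px: "prob_dist PXZ1"
    and wc: "stochastic Wc" and A1: "assumption1 Wc" and s: "0 < s" "s < 1"
  shows "Pj PM1 Ws PXZ1 Wc k n \<le> real CARD('x) powr (- s * real n) *
     (\<Sum>ms | length ms = k. markov_prob PM1 Ws ms powr (1 - s)) *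
     (\<Sum>w | length w = n. markov_prob PXZ1 Wc w powr (1 - s) *
        markov_prob (marginal_Z PXZ1) (WcZ Wc) (map snd w) powr s)"
proof -
  define K where "K = {ms :: 'm list. length ms = k}"
  define Xn where "Xn = {xt :: 'x list. length xt = n}"
  define Yn where "Yn = {ys :: ('x \<times> 'z) list. length ys = n}"
  define N where "N = real (card Xn)"
  have fin: "finite K" "finite Xn" "finite Yn"
    unfolding K_def Xn_def Yn_def by (simp_all only: finite_lists_length)
  have N: "N = real CARD('x) ^ n" "N > 0"
    unfolding N_def Xn_def using card_lists_length_eq[of "UNIV :: 'x set" n] by simp_all
  have "replicate k undefined \<in> K" "replicate n 0 \<in> Xn"
    unfolding K_def Xn_def by simp_all
  then have ne: "K \<noteq> {}" "Xn \<noteq> {}" by blast+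
  have P0: "0 \<le> markov_prob PM1 Ws ms" for ms
    using pm ws by (intro markov_prob_nonneg) (auto simp: prob_dist_def stochastic_def)
  have W0: "0 \<le> channel_prob PXZ1 Wc xt ys" for xt ys
    using px wc unfolding channel_prob_def
    by (intro markov_prob_nonneg) (auto simp: prob_dist_def stochastic_def)
  have sumP: "sum (markov_prob PM1 Ws) K = 1"
    unfolding K_def by (rule sum_markov_prob_prob_dist[OF pm ws])
  obtain e d where e: "\<forall>m\<in>K. e m \<in> Xn"
    and err: "(\<Sum>m\<in>K. \<Sum>y\<in>Yn. markov_prob PM1 Ws m * channel_prob PXZ1 Wc (e m) y * (if d y = m then 0 else 1))
      \<le> (\<Sum>m\<in>K. markov_prob PM1 Ws m powr (1 - s)) * (N powr (1 - s) *
         (\<Sum>w\<in>Yn. markov_prob PXZ1 Wc w powr (1 - s) * markov_prob (marginal_Z PXZ1) (WcZ Wc) (map snd w) powr s)) / N"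
    using random_coding_bound[where W = "channel_prob PXZ1 Wc" and Y = Yn, OF fin(1) ne(1) fin(2) ne(2) P0 sumP W0 s]
    unfolding N_def Xn_def Yn_def sum_channel_prob_powr[OF px wc A1] by blast
  have "valid_encoder k n e"
    using e unfolding valid_encoder_def K_def Xn_def by blast
  then have "Pj PM1 Ws PXZ1 Wc k n \<le> error_prob PM1 Ws PXZ1 Wc k n e d"
    by (rule Pj_le_error_prob[OF pm ws px wc])
  also have "\<dots> = (\<Sum>m\<in>K. \<Sum>y\<in>Yn. markov_prob PM1 Ws m * channel_prob PXZ1 Wc (e m) y * (if d y = m then 0 else 1))"
    unfolding error_prob_def K_def Yn_def by (simp add: sum_distrib_left mult.assoc)
  also have "\<dots> \<le> N powr (- s) * (\<Sum>m\<in>K. markov_prob PM1 Ws m powr (1 - s)) *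
      (\<Sum>w\<in>Yn. markov_prob PXZ1 Wc w powr (1 - s) * markov_prob (marginal_Z PXZ1) (WcZ Wc) (map snd w) powr s)"
    using err N(2) by (simp add: powr_diff powr_minus_divide field_simps)
  also have "N powr (- s) = real CARD('x) powr (- s * real n)"
    unfolding N by (simp add: powr_realpow[symmetric] powr_powr mult.commute)
  finally show ?thesis
    unfolding K_def Yn_def .
qed

lemma Pj_exponential_bound:
  fixes PM1 :: "'m::finite \<Rightarrow> real" and PXZ1 :: "'x::{finite,ab_group_add} \<times> 'z::finite \<Rightarrow> real"
  assumes pm: "prob_dist PM1" and ws: "stochastic Ws" and px: "prob_dist PXZ1"
    and wc: "stochastic Wc" and A1: "assumption1 Wc" and s: "0 < s" "s < 1"
  shows "\<exists>D>0. \<forall>k n. Pj PM1 Ws PXZ1 Wc k n \<le>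
     D * (real k + 1) ^ CARD('m) * (real n + 1) ^ CARD('x \<times> 'z) * real CARD('x) powr (- s * real n) *
     growth_rate (\<lambda>a b. Ws a b powr (1 - s)) ^ k * growth_rate (tilted Wc s) ^ n"
proof -
  let ?Q1 = "\<lambda>a. PM1 a powr (1 - s)" and ?A1 = "\<lambda>a b. Ws a b powr (1 - s)"
  let ?Q2 = "\<lambda>a. PXZ1 a powr (1 - s) * marginal_Z PXZ1 (snd a) powr s"
  obtain D1 where D1: "D1 > 0" "\<And>k. (\<Sum>xs | length xs = k. markov_prob ?Q1 ?A1 xs)
      \<le> D1 * (real k + 1) ^ CARD('m) * growth_rate ?A1 ^ k"
    using sum_markov_prob_growth_bound[of ?Q1 ?A1] by blast
  obtain D2 where D2: "D2 > 0" "\<And>n. (\<Sum>xs | length xs = n. markov_prob ?Q2 (tilted Wc s) xs)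
      \<le> D2 * (real n + 1) ^ CARD('x \<times> 'z) * growth_rate (tilted Wc s) ^ n"
    using sum_markov_prob_growth_bound[of ?Q2 "tilted Wc s"] by blast
  have nonneg: "\<And>a. 0 \<le> PM1 a" "\<And>a b. 0 \<le> Ws a b" "\<And>a. 0 \<le> PXZ1 a" "\<And>a b. 0 \<le> Wc a b"
    using pm ws px wc unfolding prob_dist_def stochastic_def by blast+
  have "Pj PM1 Ws PXZ1 Wc k n \<le> real CARD('x) powr (- s * real n) *
      (\<Sum>xs | length xs = k. markov_prob ?Q1 ?A1 xs) *
      (\<Sum>xs | length xs = n. markov_prob ?Q2 (tilted Wc s) xs)" for k n
    using Pj_random_coding_bound[OF pm ws px wc A1 s, of k n]
    by (simp add: markov_prob_powr[OF nonneg(1,2)] markov_prob_tilted[OF nonneg(4,3)])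
  also have "\<dots> k n \<le> real CARD('x) powr (- s * real n) *
      (D1 * (real k + 1) ^ CARD('m) * growth_rate ?A1 ^ k) *
      (D2 * (real n + 1) ^ CARD('x \<times> 'z) * growth_rate (tilted Wc s) ^ n)" for k n
    using D1(1) growth_rate_pos[of ?A1]
    by (intro mult_mono D1(2) D2(2))
      (auto intro!: sum_nonneg markov_prob_nonneg mult_nonneg_nonneg simp: tilted_apply)
  finally show ?thesis
    using D1(1) D2(1) by (intro exI[of _ "D1 * D2"]) (simp add: mult_ac)
qed

lemma tendsto_nat_floor_mult_div:
  assumes r: "r > 0"
  shows "(\<lambda>n. real (nat \<lfloor>r * real n\<rfloor>) / real n) \<longlonglongrightarrow> r"
proof (rule tendsto_sandwich[of "\<lambda>n. r - 1 / real n" _ _ "\<lambda>n. r"])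
  have "r - 1 / real n \<le> real (nat \<lfloor>r * real n\<rfloor>) / real n \<and> real (nat \<lfloor>r * real n\<rfloor>) / real n \<le> r"
    if "n > 0" for n
  proof -
    have "r * real n - 1 \<le> real (nat \<lfloor>r * real n\<rfloor>)" "real (nat \<lfloor>r * real n\<rfloor>) \<le> r * real n"
      using r by (simp_all add: of_nat_nat)
    then have "(r * real n - 1) / real n \<le> real (nat \<lfloor>r * real n\<rfloor>) / real n"
      "real (nat \<lfloor>r * real n\<rfloor>) / real n \<le> r * real n / real n"
      by (intro divide_right_mono; simp)+
    with that show ?thesis by (simp add: diff_divide_distrib)
  qed
  then have "\<forall>\<^sub>F n in sequentially. r - 1 / real n \<le> real (nat \<lfloor>r * real n\<rfloor>) / real n \<and>
      real (nat \<lfloor>r * real n\<rfloor>) / real n \<le> r"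
    by (rule eventually_mono[OF eventually_gt_at_top[of 0]])
  then show "\<forall>\<^sub>F n in sequentially. r - 1 / real n \<le> real (nat \<lfloor>r * real n\<rfloor>) / real n"
    "\<forall>\<^sub>F n in sequentially. real (nat \<lfloor>r * real n\<rfloor>) / real n \<le> r"
    by (auto elim: eventually_mono)
  show "(\<lambda>n. r - 1 / real n) \<longlonglongrightarrow> r" by real_asymp
qed simp

lemma tendsto_ln_nat_floor_mult_div:
  assumes r: "r > 0"
  shows "(\<lambda>n. ln (real (nat \<lfloor>r * real n\<rfloor>) + 1) / real n) \<longlonglongrightarrow> 0"
proof (rule tendsto_sandwich[of "\<lambda>n. 0" _ _ "\<lambda>n. (ln (r + 1) + ln (real n + 1)) / real n"])
  have "ln (real (nat \<lfloor>r * real n\<rfloor>) + 1) \<le> ln ((r + 1) * (real n + 1))" for n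
  proof -
    have "real (nat \<lfloor>r * real n\<rfloor>) \<le> r * real n" using r by (simp add: of_nat_nat)
    moreover have "(r + 1) * (real n + 1) = r * real n + 1 + (r + real n)"
      by (simp add: algebra_simps)
    ultimately have "real (nat \<lfloor>r * real n\<rfloor>) + 1 \<le> (r + 1) * (real n + 1)"
      using r by linarith
    then show ?thesis by simp
  qed
  then show "\<forall>\<^sub>F n in sequentially. ln (real (nat \<lfloor>r * real n\<rfloor>) + 1) / real n
      \<le> (ln (r + 1) + ln (real n + 1)) / real n"
    using r by (intro always_eventually allI divide_right_mono) (simp_all add: ln_mult)
  show "\<forall>\<^sub>F n in sequentially. 0 \<le> ln (real (nat \<lfloor>r * real n\<rfloor>) + 1) / real n"
    by (intro always_eventually allI divide_nonneg_nonneg) auto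
  show "(\<lambda>n. (ln (r + 1) + ln (real n + 1)) / real n) \<longlonglongrightarrow> 0"
    by real_asymp
qed simp

lemma exponential_bound_rate:
  fixes a b :: nat
  assumes r: "r > 0" and pos: "D > 0" "R > 0" "t1 > 0" "t2 > 0"
  shows "(\<lambda>n. - ln (D * (real (nat \<lfloor>r * real n\<rfloor>) + 1) ^ a * (real n + 1) ^ b * R powr (- s * real n) *
      t1 ^ nat \<lfloor>r * real n\<rfloor> * t2 ^ n) / real n) \<longlonglongrightarrow> s * ln R - (r * ln t1 + ln t2)"
proof -
  define k where "k n = nat \<lfloor>r * real n\<rfloor>" for n
  define h where "h n = s * ln R - (ln D * (1 / real n) + real a * (ln (real (k n) + 1) / real n)
      + real b * (ln (real n + 1) / real n) + real (k n) / real n * ln t1 + ln t2)" for n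
  have "h \<longlonglongrightarrow> s * ln R - (ln D * 0 + real a * 0 + real b * 0 + r * ln t1 + ln t2)"
    unfolding h_def k_def
    by (intro tendsto_intros tendsto_nat_floor_mult_div[OF r] tendsto_ln_nat_floor_mult_div[OF r]) real_asymp+
  moreover have "\<forall>\<^sub>F n in sequentially. h n = - ln (D * (real (k n) + 1) ^ a * (real n + 1) ^ b *
      R powr (- s * real n) * t1 ^ k n * t2 ^ n) / real n"
    using eventually_gt_at_top[of 0]
    by eventually_elim (use pos in \<open>simp add: h_def ln_mult ln_realpow ln_powr field_simps\<close>)
  ultimately show ?thesis
    unfolding k_def by (simp add: tendsto_cong)
qed

lemma liminf_neg_log_rate_ge:
  assumes p: "\<And>n. 0 \<le> p n" "\<And>n. p n \<le> F n" and F: "\<And>n. 0 < F n"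
    and lim: "(\<lambda>n. - ln (F n) / real n) \<longlonglongrightarrow> L"
  shows "ereal L \<le> liminf (\<lambda>n. neg_log_rate (p n) n)"
proof -
  have "liminf (\<lambda>n. ereal (- ln (F n) / real n)) = ereal L"
    using lim by (intro lim_imp_Liminf) auto
  moreover have "\<forall>\<^sub>F n in sequentially. ereal (- ln (F n) / real n) \<le> neg_log_rate (p n) n"
    using eventually_gt_at_top[of 0]
  proof eventually_elim
    case (elim n)
    show ?case
    proof (cases "p n = 0")
      case False
      with p[of n] F[of n] have "ln (p n) \<le> ln (F n)" by simp
      with elim False show ?thesis by (simp add: neg_log_rate_def divide_right_mono)
    qed (simp add: neg_log_rate_def)
  qed
  ultimately show ?thesis
    by (metis Liminf_mono)
qed

theorem mainTheorem12:
  fixes PM1 :: "'m::finite \<Rightarrow> real"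
    and Ws :: "'m \<Rightarrow> 'm \<Rightarrow> real"
    and PXZ1 :: "'x::{finite,ab_group_add} \<times> 'z::finite \<Rightarrow> real"
    and Wc :: "'x \<times> 'z \<Rightarrow> 'x \<times> 'z \<Rightarrow> real"
    and r :: real
  assumes "prob_dist PM1"
    and "stochastic Ws" and "irreducible_chain Ws" and "aperiodic_chain Ws"
    and "prob_dist PXZ1"
    and "stochastic Wc" and "irreducible_chain Wc" and "aperiodic_chain Wc"
    and "assumption1 Wc"
    and "r > 0"
    and "r * H_src Ws + H_ch Wc < ln (real CARD('x))"
  shows "liminf (\<lambda>n. neg_log_rate (Pj PM1 Ws PXZ1 Wc (nat \<lfloor>r * real n\<rfloor>) n) n)
           \<ge> (SUP s\<in>{0<..<1::real}. ereal (s * ln (real CARD('x)) - U_fun Ws Wc r s))"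
proof (rule SUP_least)
  fix s :: real assume "s \<in> {0<..<1}"
  then have s: "0 < s" "s < 1" by auto
  note pm = assms(1) and ws = assms(2) and px = assms(5) and wc = assms(6) and A1 = assms(9) and r = assms(10)
  let ?t1 = "growth_rate (\<lambda>a b. Ws a b powr (1 - s))" and ?t2 = "growth_rate (tilted Wc s)"
  obtain D where D: "D > 0" and bound: "\<And>k n. Pj PM1 Ws PXZ1 Wc k n \<le>
      D * (real k + 1) ^ CARD('m) * (real n + 1) ^ CARD('x \<times> 'z) * real CARD('x) powr (- s * real n) *
      ?t1 ^ k * ?t2 ^ n"
    using Pj_exponential_bound[OF pm ws px wc A1 s] by blast
  have "U_fun Ws Wc r s = r * ln ?t1 + ln ?t2"
    unfolding U_fun_def theta_H_src_def theta_H_ch_def ln_growth_rate tilted_def by simp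
  then show "ereal (s * ln (real CARD('x)) - U_fun Ws Wc r s)
      \<le> liminf (\<lambda>n. neg_log_rate (Pj PM1 Ws PXZ1 Wc (nat \<lfloor>r * real n\<rfloor>) n) n)"
    using liminf_neg_log_rate_ge[OF Pj_nonneg[OF pm ws px wc] bound _
        exponential_bound_rate[OF r D _ growth_rate_pos growth_rate_pos]]
    by (simp add: D growth_rate_pos)
qed

end
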